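(* Let $S_X,S_Y$ be finite nonempty action sets and $\varphi:S_X\times S_Y\to\mathbb{R}$. The following are equivalent: (a) $\varphi\equiv0$ is enforceable; (b) $\Phi_X^+\neq\emptyset$ and $\Phi_X^-\neq\emptyset$; (c) $0\in J(\varphi)$, where $$J(\varphi)=\Big[\min_{\tau_X\in\Delta(S_X)}\max_{s_Y\in S_Y}\varphi(\tau_X,s_Y),\ \max_{\tau_X\in\Delta(S_X)}\min_{s_Y\in S_Y}\varphi(\tau_X,s_Y)\Big]$$ (interpreted as the empty set if the left endpoint exceeds the right endpoint).
   Context: Two players $X,Y$ play a repeated game with finite action sets $S_X,S_Y$; $\Delta(S)$ denotes the probability distributions on $S$; $\varphi(\tau_X,s_Y)=\mathbb{E}_{s_X\sim\tau_X}[\varphi(s_X,s_Y)]$. Histories: $\mathcal{H}=\bigcup_{T\ge0}(S_X\times S_Y)^T$; behavioral strategies are maps $\sigma:\mathcal{H}\to\Delta(S)$; players independently draw actions each round from their strategies evaluated at the history of realized action pairs, with $\mathbb{E}_{\sigma_X,\sigma_Y}$ the expectation over the resulting play. For $\lambda\in[0,1)$, $\sigma_X$ is $(\varphi,\lambda)$-autocratic if for every behavioral strategy $\sigma_Y$, $\mathbb{E}_{\sigma_X,\sigma_Y}[(1-\lambda)\sum_{t\ge0}\lambda^t\varphi(s_X^t,s_Y^t)]=0$; it is $(\varphi,1)$-autocratic if for every $\sigma_Y$ the limit $\lim_{T\to\infty}\frac1{T+1}\sum_{t=0}^T\mathbb{E}_{\sigma_X,\sigma_Y}[\varphi(s_X^t,s_Y^t)]$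 exists and equals $0$. $\varphi\equiv0$ is enforceable if a $(\varphi,\lambda)$-autocratic behavioral strategy exists for some $\lambda\in[0,1]$. $\Phi_X^+=\{\tau_X\in\Delta(S_X):\min_{s_Y}\varphi(\tau_X,s_Y)\ge0\}$, $\Phi_X^-=\{\tau_X\in\Delta(S_X):\max_{s_Y}\varphi(\tau_X,s_Y)\le0\}$. *)

theory Defs
  imports "HOL-Analysis.Analysis"
begin

text \<open>Finite nonempty action sets are modelled by finite types 'x and 'y (types are nonempty).
  A mixed action is a probability vector on the (finite) action type.\<close>

definition is_dist :: "('a::finite \<Rightarrow> real) \<Rightarrow> bool" where
  "is_dist p \<longleftrightarrow> (\<forall>a. 0 \<le> p a) \<and> (\<Sum>a\<in>UNIV. p a) = 1"

definition Delta :: "('a::finite \<Rightarrow> real) set" where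
  "Delta = {p. is_dist p}"

text \<open>Histories: finite lists of realized action pairs, in chronological order.\<close>
type_synonym ('x, 'y) history = "('x \<times> 'y) list"

definition behavioral :: "(('x::finite, 'y::finite) history \<Rightarrow> ('a::finite \<Rightarrow> real)) \<Rightarrow> bool" where
  "behavioral \<sigma> \<longleftrightarrow> (\<forall>h. is_dist (\<sigma> h))"

definition hist_prob ::
  "(('x::finite, 'y::finite) history \<Rightarrow> 'x \<Rightarrow> real) \<Rightarrow> (('x, 'y) history \<Rightarrow> 'y \<Rightarrow> real)
   \<Rightarrow> ('x, 'y) history \<Rightarrow> real" where
  "hist_prob \<sigma>X \<sigma>Y h =
     (\<Prod>i<length h. \<sigma>X (take i h) (fst (h ! i)) * \<sigma>Y (take i h) (snd (h ! i)))"

definition stage_exp ::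
  "(('x::finite, 'y::finite) history \<Rightarrow> 'x \<Rightarrow> real) \<Rightarrow> (('x, 'y) history \<Rightarrow> 'y \<Rightarrow> real)
   \<Rightarrow> ('x \<Rightarrow> 'y \<Rightarrow> real) \<Rightarrow> nat \<Rightarrow> real" where
  "stage_exp \<sigma>X \<sigma>Y \<phi> t =
     (\<Sum>h\<in>{h. length h = t}. hist_prob \<sigma>X \<sigma>Y h *
        (\<Sum>a\<in>UNIV. \<Sum>b\<in>UNIV. \<sigma>X h a * \<sigma>Y h b * \<phi> a b))"

definition autocratic ::
  "(('x::finite, 'y::finite) history \<Rightarrow> 'x \<Rightarrow> real) \<Rightarrow> ('x \<Rightarrow> 'y \<Rightarrow> real) \<Rightarrow> real \<Rightarrow> bool" where
  "autocratic \<sigma>X \<phi> lam \<longleftrightarrow> behavioral \<sigma>X \<and>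
     (if lam < 1 then
        (\<forall>\<sigma>Y. behavioral \<sigma>Y \<longrightarrow> (1 - lam) * (\<Sum>t. lam ^ t * stage_exp \<sigma>X \<sigma>Y \<phi> t) = 0)
      else
        (\<forall>\<sigma>Y. behavioral \<sigma>Y \<longrightarrow>
           (\<lambda>T. (\<Sum>t\<le>T. stage_exp \<sigma>X \<sigma>Y \<phi> t) / real (T + 1)) \<longlonglongrightarrow> 0))"

definition enforceable :: "('x::finite \<Rightarrow> 'y::finite \<Rightarrow> real) \<Rightarrow> bool" where
  "enforceable \<phi> \<longleftrightarrow>
     (\<exists>lam\<in>{0..1}. \<exists>\<sigma>X :: ('x, 'y) history \<Rightarrow> 'x \<Rightarrow> real. autocratic \<sigma>X \<phi> lam)"

definition mixed_payoff :: "('x::finite \<Rightarrow> 'y \<Rightarrow> real) \<Rightarrow> ('x \<Rightarrow> real) \<Rightarrow> 'y \<Rightarrow> real" where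
  "mixed_payoff \<phi> \<tau> b = (\<Sum>a\<in>UNIV. \<tau> a * \<phi> a b)"

definition PhiX_plus :: "('x::finite \<Rightarrow> 'y::finite \<Rightarrow> real) \<Rightarrow> ('x \<Rightarrow> real) set" where
  "PhiX_plus \<phi> = {\<tau>\<in>Delta. Min (range (mixed_payoff \<phi> \<tau>)) \<ge> 0}"

definition PhiX_minus :: "('x::finite \<Rightarrow> 'y::finite \<Rightarrow> real) \<Rightarrow> ('x \<Rightarrow> real) set" where
  "PhiX_minus \<phi> = {\<tau>\<in>Delta. Max (range (mixed_payoff \<phi> \<tau>)) \<le> 0}"

text \<open>The min/max over Delta are attained (compactness),
  so they coincide with Inf/Sup.\<close>
definition J :: "('x::finite \<Rightarrow> 'y::finite \<Rightarrow> real) \<Rightarrow> real set" where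
  "J \<phi> = {Inf ((\<lambda>\<tau>. Max (range (mixed_payoff \<phi> \<tau>))) ` Delta) ..
           Sup ((\<lambda>\<tau>. Min (range (mixed_payoff \<phi> \<tau>))) ` Delta)}"

end

theory Submission
  imports Defs
begin

text \<open>
  Mixed payoffs are linear in the mixed action of X, so the max-min and min-max values over the
  compact simplex are attained: Phi+ is nonempty iff the max-min value is nonnegative, and Phi-
  is nonempty iff the min-max value is nonpositive, which is the equivalence of (b) and (c).

  If the max-min value is negative, Y answers every mixed action of X with a pure response that
  keeps each expected stage payoff below it, so neither a discounted nor a mean payoff can vanish;
  the min-max side follows by negating the payoff. Conversely, given tau+ in Phi+ and tau- in
  Phi-, X keeps the running sum of the payoffs its own mixed actions yield in expectation against
  the realised actions of Y, and plays tau- while this balance is nonnegative and tau+ otherwise.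
  The balance then stays bounded by the largest absolute payoff, and its expectation is the
  cumulative expected payoff, so the mean payoff tends to 0.
\<close>

lemma is_dist_le_1: "is_dist p \<Longrightarrow> p a \<le> 1"
  unfolding is_dist_def by (metis UNIV_I finite member_le_sum)

lemma abs_dist_sum_le:
  assumes "is_dist q" "\<And>b. \<bar>f b\<bar> \<le> B"
  shows "\<bar>\<Sum>b\<in>UNIV. q b * f b\<bar> \<le> B"
proof -
  have "\<bar>\<Sum>b\<in>UNIV. q b * f b\<bar> \<le> (\<Sum>b\<in>UNIV. q b * B)"
    using assms by (intro order.trans[OF sum_abs] sum_mono)
      (simp add: abs_mult is_dist_def mult_left_mono)
  also have "\<dots> = B"
    using assms(1) by (simp add: is_dist_def sum_distrib_right[symmetric])
  finally show ?thesis .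
qed

lemma sum_dist_marginal:
  assumes "is_dist p"
  shows "(\<Sum>a\<in>UNIV. \<Sum>b\<in>UNIV. p a * q b * f b) = (\<Sum>b\<in>UNIV. q b * f b)"
  using assms
  by (simp add: is_dist_def mult.assoc sum_distrib_left[symmetric] sum_distrib_right[symmetric])

lemma bounded_payoff: "\<exists>B. \<forall>a b. \<bar>\<phi> (a::'x::finite) (b::'y::finite)\<bar> \<le> (B::real)"
proof (intro exI allI)
  show "\<bar>\<phi> a b\<bar> \<le> Max (range (\<lambda>(a, b). \<bar>\<phi> a b\<bar>))" for a b
    by (rule Max_ge) (auto intro: image_eqI[of _ _ "(a, b)"])
qed

lemma mixed_payoff_uminus: "mixed_payoff (\<lambda>a b. - \<phi> a b) \<tau> b = - mixed_payoff \<phi> \<tau> b"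
  by (simp add: mixed_payoff_def sum_negf)

lemma abs_mixed_payoff_le:
  assumes "\<tau> \<in> Delta" "\<And>a b. \<bar>\<phi> a b\<bar> \<le> B"
  shows "\<bar>mixed_payoff \<phi> \<tau> b\<bar> \<le> B"
  using assms unfolding mixed_payoff_def Delta_def by (intro abs_dist_sum_le) auto

lemma sum_sum_payoff_eq_mixed_payoff: "(\<Sum>a\<in>UNIV. \<Sum>b\<in>UNIV. p a * q b * \<phi> a b) = (\<Sum>b\<in>UNIV. q b * mixed_payoff \<phi> p b)"
  unfolding mixed_payoff_def by (subst sum.swap) (simp add: sum_distrib_left mult_ac)

lemma PhiX_plus_iff: "\<tau> \<in> PhiX_plus \<phi> \<longleftrightarrow> \<tau> \<in> Delta \<and> (\<forall>b. 0 \<le> mixed_payoff \<phi> \<tau> b)"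
  by (simp add: PhiX_plus_def Min_ge_iff)

lemma PhiX_minus_iff: "\<tau> \<in> PhiX_minus \<phi> \<longleftrightarrow> \<tau> \<in> Delta \<and> (\<forall>b. mixed_payoff \<phi> \<tau> b \<le> 0)"
  by (simp add: PhiX_minus_def Max_le_iff)

lemma PhiX_minus_eq_PhiX_plus_uminus: "PhiX_minus \<phi> = PhiX_plus (\<lambda>a b. - \<phi> a b)"
  by (auto simp: PhiX_minus_iff PhiX_plus_iff mixed_payoff_uminus)

section \<open>Max-min and min-max values of the one-shot game\<close>

definition maxmin :: "('x::finite \<Rightarrow> 'y::finite \<Rightarrow> real) \<Rightarrow> real" where
  "maxmin \<phi> = Sup ((\<lambda>\<tau>. Min (range (mixed_payoff \<phi> \<tau>))) ` Delta)"

definition minmax :: "('x::finite \<Rightarrow> 'y::finite \<Rightarrow> real) \<Rightarrow> real" where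
  "minmax \<phi> = Inf ((\<lambda>\<tau>. Max (range (mixed_payoff \<phi> \<tau>))) ` Delta)"

lemma J_eq: "J \<phi> = {minmax \<phi>..maxmin \<phi>}"
  by (simp add: J_def maxmin_def minmax_def)

lemma compact_Delta: "compact (Delta :: ('a::finite \<Rightarrow> real) set)"
proof -
  have "compactin (product_topology (\<lambda>_. euclidean) UNIV) (PiE UNIV (\<lambda>_::'a. {0..1::real}))"
    by (simp add: compactin_PiE)
  then have "compact (PiE UNIV (\<lambda>_::'a. {0..1::real}))"
    by (metis compactin_euclidean_iff euclidean_product_topology)
  moreover have "closed (Delta :: ('a \<Rightarrow> real) set)"
    unfolding Delta_def is_dist_def
    by (intro closed_Collect_conj closed_Collect_all closed_Collect_le closed_Collect_eq
        continuous_intros) auto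
  moreover have "Delta \<subseteq> PiE UNIV (\<lambda>_::'a. {0..1::real})"
    by (auto simp: Delta_def is_dist_le_1) (simp add: is_dist_def)
  ultimately show ?thesis
    by (metis compact_Int_closed inf.absorb2)
qed

lemma Delta_nonempty: "(Delta :: ('a::finite \<Rightarrow> real) set) \<noteq> {}"
proof -
  have "(\<lambda>_. 1 / real CARD('a)) \<in> (Delta :: ('a \<Rightarrow> real) set)"
    by (simp add: Delta_def is_dist_def)
  then show ?thesis by blast
qed

lemma continuous_on_Min_image:
  fixes f :: "'i \<Rightarrow> 'a::topological_space \<Rightarrow> 'b::linorder_topology"
  assumes "finite I" "I \<noteq> {}" "\<And>i. i \<in> I \<Longrightarrow> continuous_on S (f i)"
  shows "continuous_on S (\<lambda>v. Min ((\<lambda>i. f i v) ` I))"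
  using assms
proof (induction I rule: finite_ne_induct)
  case (insert i I)
  then show ?case
    by (simp add: Min_insert continuous_on_min)
qed simp

lemma Min_mixed_payoff_has_maximum:
  fixes \<phi> :: "'x::finite \<Rightarrow> 'y::finite \<Rightarrow> real"
  shows "\<exists>\<tau>\<in>Delta. \<forall>\<tau>'\<in>Delta. Min (range (mixed_payoff \<phi> \<tau>')) \<le> Min (range (mixed_payoff \<phi> \<tau>))"
proof (rule continuous_attains_sup[OF compact_Delta Delta_nonempty])
  show "continuous_on Delta (\<lambda>\<tau>. Min (range (mixed_payoff \<phi> \<tau>)))"
    unfolding mixed_payoff_def
    by (intro continuous_on_Min_image continuous_intros)
      (auto intro: continuous_on_subset[OF continuous_on_product_coordinates])
qed

lemma Min_mixed_payoff_le_maxmin: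
  assumes "\<tau> \<in> Delta"
  shows "Min (range (mixed_payoff \<phi> \<tau>)) \<le> maxmin \<phi>"
proof -
  obtain \<tau>\<^sub>0 where "\<forall>\<tau>\<in>Delta. Min (range (mixed_payoff \<phi> \<tau>)) \<le> Min (range (mixed_payoff \<phi> \<tau>\<^sub>0))"
    using Min_mixed_payoff_has_maximum by blast
  then have "bdd_above ((\<lambda>\<tau>. Min (range (mixed_payoff \<phi> \<tau>))) ` Delta)"
    by (intro bdd_aboveI2[where M = "Min (range (mixed_payoff \<phi> \<tau>\<^sub>0))"]) blast
  then show ?thesis
    unfolding maxmin_def using assms by (intro cSup_upper) auto
qed

lemma maxmin_attained: "\<exists>\<tau>\<in>Delta. Min (range (mixed_payoff \<phi> \<tau>)) = maxmin \<phi>"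
proof -
  obtain \<tau>\<^sub>0 where "\<tau>\<^sub>0 \<in> Delta"
    and "\<forall>\<tau>\<in>Delta. Min (range (mixed_payoff \<phi> \<tau>)) \<le> Min (range (mixed_payoff \<phi> \<tau>\<^sub>0))"
    using Min_mixed_payoff_has_maximum by blast
  then have "Min (range (mixed_payoff \<phi> \<tau>\<^sub>0)) = maxmin \<phi>"
    unfolding maxmin_def by (intro cSup_eq_maximum[symmetric]) auto
  with \<open>\<tau>\<^sub>0 \<in> Delta\<close> show ?thesis by blast
qed

lemma exists_response_le_maxmin:
  assumes "\<tau> \<in> Delta"
  shows "\<exists>b. mixed_payoff \<phi> \<tau> b \<le> maxmin \<phi>"
proof -
  have "Min (range (mixed_payoff \<phi> \<tau>)) \<in> range (mixed_payoff \<phi> \<tau>)"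
    by (rule Min_in) auto
  then obtain b where "mixed_payoff \<phi> \<tau> b = Min (range (mixed_payoff \<phi> \<tau>))"
    by (metis rangeE)
  with Min_mixed_payoff_le_maxmin[OF assms, of \<phi>] show ?thesis
    by metis
qed

lemma minmax_eq_uminus_maxmin: "minmax \<phi> = - maxmin (\<lambda>a b. - \<phi> a b)"
proof -
  have "Max (range (mixed_payoff \<phi> \<tau>)) = - Min (range (mixed_payoff (\<lambda>a b. - \<phi> a b) \<tau>))" for \<tau>
  proof -
    have "range (mixed_payoff (\<lambda>a b. - \<phi> a b) \<tau>) = uminus ` range (mixed_payoff \<phi> \<tau>)"
      by (auto simp: mixed_payoff_uminus image_image)
    then show ?thesis
      by (simp add: image_image)
  qed
  then show ?thesis
    by (simp add: minmax_def maxmin_def Inf_real_def image_image)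
qed

lemma PhiX_plus_nonempty_iff: "PhiX_plus \<phi> \<noteq> {} \<longleftrightarrow> 0 \<le> maxmin \<phi>"
proof
  assume "PhiX_plus \<phi> \<noteq> {}"
  then obtain \<tau> where "\<tau> \<in> Delta" "0 \<le> Min (range (mixed_payoff \<phi> \<tau>))"
    unfolding PhiX_plus_def by blast
  then show "0 \<le> maxmin \<phi>"
    using Min_mixed_payoff_le_maxmin[where \<tau> = \<tau> and \<phi> = \<phi>] by linarith
next
  assume "0 \<le> maxmin \<phi>"
  moreover obtain \<tau> where "\<tau> \<in> Delta" "Min (range (mixed_payoff \<phi> \<tau>)) = maxmin \<phi>"
    using maxmin_attained by blast
  ultimately have "\<tau> \<in> PhiX_plus \<phi>"
    unfolding PhiX_plus_def by (simp del: Min_ge_iff)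
  then show "PhiX_plus \<phi> \<noteq> {}"
    by blast
qed

lemma PhiX_minus_nonempty_iff: "PhiX_minus \<phi> \<noteq> {} \<longleftrightarrow> minmax \<phi> \<le> 0"
  by (simp add: PhiX_minus_eq_PhiX_plus_uminus PhiX_plus_nonempty_iff minmax_eq_uminus_maxmin)

section \<open>Expectations over histories\<close>

definition hist_expect ::
  "(('x::finite, 'y::finite) history \<Rightarrow> 'x \<Rightarrow> real) \<Rightarrow> (('x, 'y) history \<Rightarrow> 'y \<Rightarrow> real)
   \<Rightarrow> nat \<Rightarrow> (('x, 'y) history \<Rightarrow> real) \<Rightarrow> real" where
  "hist_expect \<sigma>X \<sigma>Y t F = (\<Sum>h\<in>{h. length h = t}. hist_prob \<sigma>X \<sigma>Y h * F h)"

lemma hist_prob_snoc: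
  "hist_prob \<sigma>X \<sigma>Y (h @ [(a, b)]) = hist_prob \<sigma>X \<sigma>Y h * (\<sigma>X h a * \<sigma>Y h b)"
proof -
  have "hist_prob \<sigma>X \<sigma>Y h =
      (\<Prod>i<length h. \<sigma>X (take i (h @ [(a, b)])) (fst ((h @ [(a, b)]) ! i))
        * \<sigma>Y (take i (h @ [(a, b)])) (snd ((h @ [(a, b)]) ! i)))"
    unfolding hist_prob_def by (intro prod.cong) (auto simp: nth_append)
  then show ?thesis
    by (simp add: hist_prob_def prod.lessThan_Suc)
qed

lemma hist_prob_nonneg: "behavioral \<sigma>X \<Longrightarrow> behavioral \<sigma>Y \<Longrightarrow> 0 \<le> hist_prob \<sigma>X \<sigma>Y h"
  unfolding hist_prob_def behavioral_def is_dist_def by (intro prod_nonneg) auto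

lemma sum_length_Suc:
  fixes F :: "'a::finite list \<Rightarrow> 'b::comm_monoid_add"
  shows "(\<Sum>h\<in>{h. length h = Suc t}. F h) = (\<Sum>h\<in>{h. length h = t}. \<Sum>p\<in>UNIV. F (h @ [p]))"
proof -
  have "{h :: 'a list. length h = Suc t} = (\<lambda>(h, p). h @ [p]) ` ({h. length h = t} \<times> UNIV)"
  proof (intro set_eqI iffI)
    fix h :: "'a list"
    assume "h \<in> {h. length h = Suc t}"
    then have "h \<noteq> []" "length (butlast h) = t"
      by auto
    then show "h \<in> (\<lambda>(h, p). h @ [p]) ` ({h. length h = t} \<times> UNIV)"
      by (auto intro!: image_eqI[of _ _ "(butlast h, last h)"])
  qed auto
  moreover have "inj_on (\<lambda>(h, p). h @ [p]) ({h :: 'a list. length h = t} \<times> UNIV)"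
    by (auto simp: inj_on_def)
  ultimately show ?thesis
    by (simp add: sum.reindex sum.cartesian_product case_prod_unfold)
qed

lemma sum_UNIV_prod:
  "(\<Sum>p\<in>UNIV. G p) = (\<Sum>a\<in>UNIV. \<Sum>b\<in>UNIV. G (a, b))"
  for G :: "'a::finite \<times> 'b::finite \<Rightarrow> 'c::comm_monoid_add"
  by (simp add: sum.cartesian_product)

lemma hist_expect_0: "hist_expect \<sigma>X \<sigma>Y 0 F = F []"
  by (simp add: hist_expect_def hist_prob_def)

lemma hist_expect_Suc:
  "hist_expect \<sigma>X \<sigma>Y (Suc t) F =
     hist_expect \<sigma>X \<sigma>Y t (\<lambda>h. \<Sum>a\<in>UNIV. \<Sum>b\<in>UNIV. \<sigma>X h a * \<sigma>Y h b * F (h @ [(a, b)]))"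
  unfolding hist_expect_def sum_length_Suc sum_UNIV_prod
  by (simp add: hist_prob_snoc sum_distrib_left mult_ac)

lemma hist_expect_add:
  "hist_expect \<sigma>X \<sigma>Y t (\<lambda>h. F h + G h) = hist_expect \<sigma>X \<sigma>Y t F + hist_expect \<sigma>X \<sigma>Y t G"
  by (simp add: hist_expect_def distrib_left sum.distrib)

lemma hist_expect_const:
  assumes "behavioral \<sigma>X" "behavioral \<sigma>Y"
  shows "hist_expect \<sigma>X \<sigma>Y t (\<lambda>_. c) = c"
proof (induction t)
  case 0
  show ?case by (simp add: hist_expect_0)
next
  case (Suc t)
  have "(\<Sum>a\<in>UNIV. \<Sum>b\<in>UNIV. \<sigma>X h a * \<sigma>Y h b * c) = (\<Sum>b\<in>UNIV. \<sigma>Y h b * c)" for h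
    using assms(1) by (intro sum_dist_marginal) (simp add: behavioral_def)
  also have "(\<Sum>b\<in>UNIV. \<sigma>Y h b * c) = c" for h
    using assms(2) by (simp add: behavioral_def is_dist_def sum_distrib_right[symmetric])
  finally show ?case
    by (simp add: hist_expect_Suc Suc.IH)
qed

lemma hist_expect_mono:
  assumes "behavioral \<sigma>X" "behavioral \<sigma>Y" "\<And>h. length h = t \<Longrightarrow> F h \<le> G h"
  shows "hist_expect \<sigma>X \<sigma>Y t F \<le> hist_expect \<sigma>X \<sigma>Y t G"
  unfolding hist_expect_def
  using assms hist_prob_nonneg by (intro sum_mono mult_left_mono) auto

lemma abs_hist_expect_le:
  assumes "behavioral \<sigma>X" "behavioral \<sigma>Y" "\<And>h. \<bar>F h\<bar> \<le> B"
  shows "\<bar>hist_expect \<sigma>X \<sigma>Y t F\<bar> \<le> B"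
proof -
  have "F h \<le> B" "- B \<le> F h" for h
    using assms(3)[of h] by (auto simp: abs_le_iff)
  then have "hist_expect \<sigma>X \<sigma>Y t F \<le> hist_expect \<sigma>X \<sigma>Y t (\<lambda>_. B)"
    "hist_expect \<sigma>X \<sigma>Y t (\<lambda>_. - B) \<le> hist_expect \<sigma>X \<sigma>Y t F"
    using assms(1,2) by (simp_all add: hist_expect_mono)
  then show ?thesis
    using assms(1,2) by (simp add: hist_expect_const)
qed

lemma stage_exp_eq_hist_expect:
  "stage_exp \<sigma>X \<sigma>Y \<phi> t = hist_expect \<sigma>X \<sigma>Y t (\<lambda>h. \<Sum>b\<in>UNIV. \<sigma>Y h b * mixed_payoff \<phi> (\<sigma>X h) b)"
  by (simp add: stage_exp_def hist_expect_def sum_sum_payoff_eq_mixed_payoff)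

lemma stage_exp_uminus: "stage_exp \<sigma>X \<sigma>Y (\<lambda>a b. - \<phi> a b) t = - stage_exp \<sigma>X \<sigma>Y \<phi> t"
  by (simp add: stage_exp_def sum_negf)

lemma abs_stage_exp_le:
  assumes "behavioral \<sigma>X" "behavioral \<sigma>Y" "\<And>a b. \<bar>\<phi> a b\<bar> \<le> B"
  shows "\<bar>stage_exp \<sigma>X \<sigma>Y \<phi> t\<bar> \<le> B"
  unfolding stage_exp_eq_hist_expect
  using assms by (intro abs_hist_expect_le abs_dist_sum_le abs_mixed_payoff_le)
    (auto simp: behavioral_def Delta_def)

definition long_run_zero :: "real \<Rightarrow> (nat \<Rightarrow> real) \<Rightarrow> bool" where
  "long_run_zero lam f \<longleftrightarrow>
     (if lam < 1 then (1 - lam) * (\<Sum>t. lam ^ t * f t) = 0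
      else (\<lambda>T. (\<Sum>t\<le>T. f t) / real (T + 1)) \<longlonglongrightarrow> 0)"

lemma autocratic_iff:
  "autocratic \<sigma>X \<phi> lam \<longleftrightarrow>
     behavioral \<sigma>X \<and> (\<forall>\<sigma>Y. behavioral \<sigma>Y \<longrightarrow> long_run_zero lam (stage_exp \<sigma>X \<sigma>Y \<phi>))"
  by (auto simp: autocratic_def long_run_zero_def)

lemma summable_discounted:
  fixes lam :: real and f :: "nat \<Rightarrow> real"
  assumes "0 \<le> lam" "lam < 1" "\<And>t. \<bar>f t\<bar> \<le> B"
  shows "summable (\<lambda>t. lam ^ t * f t)"
proof (rule summable_comparison_test[where g = "\<lambda>t. B * lam ^ t"])
  show "\<exists>N. \<forall>t\<ge>N. norm (lam ^ t * f t) \<le> B * lam ^ t"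
  proof (intro exI[of _ 0] allI impI)
    fix t :: nat
    have "\<bar>f t\<bar> * lam ^ t \<le> B * lam ^ t"
      using assms by (intro mult_right_mono) auto
    then show "norm (lam ^ t * f t) \<le> B * lam ^ t"
      using assms(1) by (simp add: abs_mult mult.commute)
  qed
  show "summable (\<lambda>t. B * lam ^ t)"
    using assms by (intro summable_mult summable_geometric) auto
qed

lemma long_run_zero_uminus:
  assumes "long_run_zero lam f" "0 \<le> lam" "\<And>t. \<bar>f t\<bar> \<le> B"
  shows "long_run_zero lam (\<lambda>t. - f t)"
proof (cases "lam < 1")
  case True
  then show ?thesis
    using assms suminf_minus[OF summable_discounted[OF assms(2) True assms(3)]]
    by (simp add: long_run_zero_def)
next
  case False
  then show ?thesis
    using assms(1) tendsto_minus[of "\<lambda>T. (\<Sum>t\<le>T. f t) / real (T + 1)" 0 sequentially]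
    by (simp add: long_run_zero_def sum_negf)
qed

lemma long_run_zero_imp_nonneg:
  assumes "long_run_zero lam f" "0 \<le> lam" "\<And>t. \<bar>f t\<bar> \<le> B" "\<And>t. f t \<le> c"
  shows "0 \<le> c"
proof (cases "lam < 1")
  case True
  have "summable (\<lambda>t. lam ^ t * c)"
    using assms(2) True by (intro summable_mult2 summable_geometric) simp
  then have "(\<Sum>t. lam ^ t * f t) \<le> (\<Sum>t. lam ^ t * c)"
    using summable_discounted[OF assms(2) True assms(3)] assms(2,4)
    by (intro suminf_le) (simp_all add: mult_left_mono)
  also have "\<dots> = c / (1 - lam)"
    using assms True by (simp add: suminf_mult2[symmetric] suminf_geometric)
  finally have "(1 - lam) * (\<Sum>t. lam ^ t * f t) \<le> c"
    using True by (simp add: field_simps)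
  then show ?thesis
    using assms(1) True by (simp add: long_run_zero_def)
next
  case False
  then have "(\<lambda>T. (\<Sum>t\<le>T. f t) / real (T + 1)) \<longlonglongrightarrow> 0"
    using assms(1) by (simp add: long_run_zero_def)
  moreover have "\<forall>T\<ge>0. (\<Sum>t\<le>T. f t) / real (T + 1) \<le> c"
    using sum_mono[of "{..T}" f "\<lambda>_. c" for T] assms(4) by (simp add: divide_le_eq mult.commute)
  ultimately show ?thesis
    by (blast intro: LIMSEQ_le_const2)
qed

lemma long_run_zero_1_if_bounded_sums:
  assumes "\<And>T. \<bar>\<Sum>t\<le>T. f t\<bar> \<le> B"
  shows "long_run_zero 1 f"
proof -
  have "(\<lambda>T. (\<Sum>t\<le>T. f t) / real (T + 1)) \<longlonglongrightarrow> 0"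
  proof (rule Lim_null_comparison)
    have "\<bar>\<Sum>t\<le>T. f t\<bar> * inverse (real (Suc T)) \<le> B * inverse (real (Suc T))" for T
      using assms by (intro mult_right_mono) auto
    then show "\<forall>\<^sub>F T in sequentially. norm ((\<Sum>t\<le>T. f t) / real (T + 1)) \<le> B * inverse (real (Suc T))"
      by (intro always_eventually allI) (simp add: divide_inverse abs_mult)
    show "(\<lambda>T. B * inverse (real (Suc T))) \<longlonglongrightarrow> 0"
      by (intro tendsto_mult_right_zero LIMSEQ_inverse_real_of_nat)
  qed
  then show ?thesis
    by (simp add: long_run_zero_def)
qed

section \<open>Punishment by best responses\<close>

lemma autocratic_uminus:
  fixes \<sigma>X :: "('x::finite, 'y::finite) history \<Rightarrow> 'x \<Rightarrow> real"
  assumes "autocratic \<sigma>X \<phi> lam" "0 \<le> lam"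
  shows "autocratic \<sigma>X (\<lambda>a b. - \<phi> a b) lam"
proof -
  obtain B where "\<forall>a b. \<bar>\<phi> a b\<bar> \<le> B"
    using bounded_payoff by blast
  then show ?thesis
    using assms unfolding autocratic_iff stage_exp_uminus
    by (blast intro: long_run_zero_uminus abs_stage_exp_le)
qed

lemma autocratic_imp_maxmin_nonneg:
  fixes \<sigma>X :: "('x::finite, 'y::finite) history \<Rightarrow> 'x \<Rightarrow> real"
  assumes "autocratic \<sigma>X \<phi> lam" "0 \<le> lam"
  shows "0 \<le> maxmin \<phi>"
proof -
  obtain B where B: "\<And>a b. \<bar>\<phi> a b\<bar> \<le> B"
    using bounded_payoff by blast
  have bX: "behavioral \<sigma>X"
    using assms(1) by (simp add: autocratic_iff)
  then have "\<forall>h. \<exists>b. mixed_payoff \<phi> (\<sigma>X h) b \<le> maxmin \<phi>"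
    by (auto simp: behavioral_def Delta_def intro: exists_response_le_maxmin)
  then obtain r where r: "\<And>h. mixed_payoff \<phi> (\<sigma>X h) (r h) \<le> maxmin \<phi>"
    by metis
  define \<sigma>Y :: "('x, 'y) history \<Rightarrow> 'y \<Rightarrow> real" where "\<sigma>Y h b = (if b = r h then 1 else 0)" for h b
  have bY: "behavioral \<sigma>Y"
    by (simp add: behavioral_def is_dist_def \<sigma>Y_def)
  have pure: "(\<Sum>b\<in>UNIV. \<sigma>Y h b * g b) = g (r h)" for h and g :: "'y \<Rightarrow> real"
    by (simp add: \<sigma>Y_def if_distrib[of "\<lambda>x. x * _"] cong: if_cong)
  have "stage_exp \<sigma>X \<sigma>Y \<phi> t \<le> hist_expect \<sigma>X \<sigma>Y t (\<lambda>_. maxmin \<phi>)" for t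
    unfolding stage_exp_eq_hist_expect pure using bX bY r by (rule hist_expect_mono)
  then have "stage_exp \<sigma>X \<sigma>Y \<phi> t \<le> maxmin \<phi>" for t
    using bX bY by (simp add: hist_expect_const)
  moreover have "long_run_zero lam (stage_exp \<sigma>X \<sigma>Y \<phi>)"
    using assms(1) bY by (simp add: autocratic_iff)
  ultimately show ?thesis
    using long_run_zero_imp_nonneg assms(2) abs_stage_exp_le[where \<phi> = \<phi>, OF bX bY B] by blast
qed

lemma autocratic_imp_minmax_nonpos:
  fixes \<sigma>X :: "('x::finite, 'y::finite) history \<Rightarrow> 'x \<Rightarrow> real"
  assumes "autocratic \<sigma>X \<phi> lam" "0 \<le> lam"
  shows "minmax \<phi> \<le> 0"
  using autocratic_imp_maxmin_nonneg[OF autocratic_uminus[OF assms] assms(2)]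
  by (simp add: minmax_eq_uminus_maxmin)

section \<open>The balancing strategy\<close>

definition balance ::
  "('x::finite \<Rightarrow> 'y::finite \<Rightarrow> real) \<Rightarrow> ('x \<Rightarrow> real) \<Rightarrow> ('x \<Rightarrow> real) \<Rightarrow> ('x, 'y) history \<Rightarrow> real" where
  "balance \<phi> \<tau>p \<tau>m h = foldl (\<lambda>w (a, b). w + mixed_payoff \<phi> (if 0 \<le> w then \<tau>m else \<tau>p) b) 0 h"

definition balancing_strategy ::
  "('x::finite \<Rightarrow> 'y::finite \<Rightarrow> real) \<Rightarrow> ('x \<Rightarrow> real) \<Rightarrow> ('x \<Rightarrow> real) \<Rightarrow> ('x, 'y) history \<Rightarrow> 'x \<Rightarrow> real" where
  "balancing_strategy \<phi> \<tau>p \<tau>m h = (if 0 \<le> balance \<phi> \<tau>p \<tau>m h then \<tau>m else \<tau>p)"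

lemma balance_Nil: "balance \<phi> \<tau>p \<tau>m [] = 0"
  by (simp add: balance_def)

lemma balance_snoc:
  "balance \<phi> \<tau>p \<tau>m (h @ [(a, b)]) =
     balance \<phi> \<tau>p \<tau>m h + mixed_payoff \<phi> (balancing_strategy \<phi> \<tau>p \<tau>m h) b"
  by (simp add: balance_def balancing_strategy_def)

lemma abs_balance_le:
  assumes "\<tau>p \<in> PhiX_plus \<phi>" "\<tau>m \<in> PhiX_minus \<phi>" "\<And>a b. \<bar>\<phi> a b\<bar> \<le> B"
  shows "\<bar>balance \<phi> \<tau>p \<tau>m h\<bar> \<le> B"
proof (induction h rule: rev_induct)
  case Nil
  show ?case
    using assms(3) by (simp add: balance_Nil) (meson abs_ge_zero order_trans)
next
  case (snoc p h)
  have "\<tau>p \<in> Delta" "\<tau>m \<in> Delta"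
    using assms(1,2) by (simp_all add: PhiX_plus_iff PhiX_minus_iff)
  obtain a b where "p = (a, b)"
    by fastforce
  moreover have "0 \<le> mixed_payoff \<phi> \<tau>p b" "mixed_payoff \<phi> \<tau>m b \<le> 0"
    using assms(1,2) by (auto simp: PhiX_plus_iff PhiX_minus_iff)
  moreover have "\<bar>mixed_payoff \<phi> \<tau>p b\<bar> \<le> B"
    using \<open>\<tau>p \<in> Delta\<close> assms(3) by (rule abs_mixed_payoff_le)
  moreover have "\<bar>mixed_payoff \<phi> \<tau>m b\<bar> \<le> B"
    using \<open>\<tau>m \<in> Delta\<close> assms(3) by (rule abs_mixed_payoff_le)
  ultimately show ?case
    using snoc.IH by (simp add: balance_snoc balancing_strategy_def abs_le_iff)
qed

lemma behavioral_balancing_strategy: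
  "\<tau>p \<in> Delta \<Longrightarrow> \<tau>m \<in> Delta \<Longrightarrow> behavioral (balancing_strategy \<phi> \<tau>p \<tau>m)"
  by (simp add: behavioral_def balancing_strategy_def Delta_def)

lemma sum_stage_exp_balancing_strategy:
  fixes \<phi> :: "'x::finite \<Rightarrow> 'y::finite \<Rightarrow> real" and \<tau>p \<tau>m :: "'x \<Rightarrow> real"
  defines "\<sigma>X \<equiv> balancing_strategy \<phi> \<tau>p \<tau>m"
  assumes "\<tau>p \<in> Delta" "\<tau>m \<in> Delta" "behavioral \<sigma>Y"
  shows "(\<Sum>t\<le>T. stage_exp \<sigma>X \<sigma>Y \<phi> t) = hist_expect \<sigma>X \<sigma>Y (Suc T) (balance \<phi> \<tau>p \<tau>m)"
proof -
  have step: "(\<Sum>a\<in>UNIV. \<Sum>b\<in>UNIV. \<sigma>X h a * \<sigma>Y h b * balance \<phi> \<tau>p \<tau>m (h @ [(a, b)])) =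
      balance \<phi> \<tau>p \<tau>m h + (\<Sum>b\<in>UNIV. \<sigma>Y h b * mixed_payoff \<phi> (\<sigma>X h) b)" for h
  proof -
    have "is_dist (\<sigma>X h)"
      using assms by (simp add: \<sigma>X_def balancing_strategy_def Delta_def)
    have "(\<Sum>a\<in>UNIV. \<Sum>b\<in>UNIV. \<sigma>X h a * \<sigma>Y h b * balance \<phi> \<tau>p \<tau>m (h @ [(a, b)])) =
        (\<Sum>a\<in>UNIV. \<Sum>b\<in>UNIV. \<sigma>X h a * \<sigma>Y h b * (balance \<phi> \<tau>p \<tau>m h + mixed_payoff \<phi> (\<sigma>X h) b))"
      by (simp add: balance_snoc \<sigma>X_def)
    also have "\<dots> = (\<Sum>b\<in>UNIV. \<sigma>Y h b * (balance \<phi> \<tau>p \<tau>m h + mixed_payoff \<phi> (\<sigma>X h) b))"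
      by (rule sum_dist_marginal) fact
    also have "\<dots> = balance \<phi> \<tau>p \<tau>m h + (\<Sum>b\<in>UNIV. \<sigma>Y h b * mixed_payoff \<phi> (\<sigma>X h) b)"
      using assms(4)
      by (simp add: behavioral_def is_dist_def distrib_left sum.distrib sum_distrib_right[symmetric])
    finally show ?thesis .
  qed
  have "hist_expect \<sigma>X \<sigma>Y (Suc t) (balance \<phi> \<tau>p \<tau>m) =
      hist_expect \<sigma>X \<sigma>Y t (balance \<phi> \<tau>p \<tau>m) + stage_exp \<sigma>X \<sigma>Y \<phi> t" for t
    by (simp add: hist_expect_Suc step hist_expect_add stage_exp_eq_hist_expect)
  then show ?thesis
    by (induction T) (simp_all add: hist_expect_0 balance_Nil)
qed

lemma autocratic_balancing_strategy:
  assumes "\<tau>p \<in> PhiX_plus \<phi>" "\<tau>m \<in> PhiX_minus \<phi>"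
  shows "autocratic (balancing_strategy \<phi> \<tau>p \<tau>m) \<phi> 1"
proof -
  obtain B where B: "\<And>a b. \<bar>\<phi> a b\<bar> \<le> B"
    using bounded_payoff by blast
  have \<tau>: "\<tau>p \<in> Delta" "\<tau>m \<in> Delta"
    using assms by (auto simp: PhiX_plus_iff PhiX_minus_iff)
  have "long_run_zero 1 (stage_exp (balancing_strategy \<phi> \<tau>p \<tau>m) \<sigma>Y \<phi>)" if "behavioral \<sigma>Y" for \<sigma>Y
    using that \<tau>
    by (intro long_run_zero_1_if_bounded_sums[where B = B])
      (simp add: sum_stage_exp_balancing_strategy abs_hist_expect_le abs_balance_le[OF assms B]
        behavioral_balancing_strategy)
  then show ?thesis
    using \<tau> by (simp add: autocratic_iff behavioral_balancing_strategy)
qed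

theorem corollary3:
  fixes \<phi> :: "'x::finite \<Rightarrow> 'y::finite \<Rightarrow> real"
  shows "(enforceable \<phi> \<longleftrightarrow> PhiX_plus \<phi> \<noteq> {} \<and> PhiX_minus \<phi> \<noteq> {})
       \<and> (PhiX_plus \<phi> \<noteq> {} \<and> PhiX_minus \<phi> \<noteq> {} \<longleftrightarrow> 0 \<in> J \<phi>)"
proof -
  have "enforceable \<phi> \<longleftrightarrow> 0 \<le> maxmin \<phi> \<and> minmax \<phi> \<le> 0"
  proof
    assume "enforceable \<phi>"
    then obtain lam and \<sigma>X :: "('x, 'y) history \<Rightarrow> 'x \<Rightarrow> real"
      where "0 \<le> lam" "autocratic \<sigma>X \<phi> lam"
      unfolding enforceable_def by auto
    then show "0 \<le> maxmin \<phi> \<and> minmax \<phi> \<le> 0"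
      using autocratic_imp_maxmin_nonneg autocratic_imp_minmax_nonpos by blast
  next
    assume "0 \<le> maxmin \<phi> \<and> minmax \<phi> \<le> 0"
    then obtain \<tau>p \<tau>m where "\<tau>p \<in> PhiX_plus \<phi>" "\<tau>m \<in> PhiX_minus \<phi>"
      unfolding PhiX_plus_nonempty_iff[symmetric] PhiX_minus_nonempty_iff[symmetric] by blast
    then have "autocratic (balancing_strategy \<phi> \<tau>p \<tau>m :: ('x, 'y) history \<Rightarrow> 'x \<Rightarrow> real) \<phi> 1"
      by (rule autocratic_balancing_strategy)
    then show "enforceable \<phi>"
      unfolding enforceable_def by force
  qed
  then show ?thesis
    by (auto simp: PhiX_plus_nonempty_iff PhiX_minus_nonempty_iff J_eq)
qed

end
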